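(* Let $R$ be a discrete valuation ring with uniformizer $\pi$ and fraction field $F$. Let $n=n_1+\cdots+n_m$ and consider the subgroups $L=\mathrm{GL}_{n_1}\times\cdots\times\mathrm{GL}_{n_m}$ (block diagonal) $\subset P$ (block lower triangular with diagonal blocks $\mathrm{GL}_{n_1},\dots,\mathrm{GL}_{n_m}$) $\subset\mathrm{GL}_n$. Let $g\in P(F)$ and let $g_L\in L(F)$ be its block-diagonal part (its image in the Levi quotient). Put $N_l=n_1+\cdots+n_l$ for $0\le l\le m$. Let $k_1\ge\cdots\ge k_n$ be integers and assume that for every $0\le l\le m-1$ the matrix $(g_{ij})_{N_l+1\le i,j\le n}\in\mathrm{GL}_{n-N_l}(F)$ has type $(k_{N_l+1},\dots,k_n)$. Then $g_L^{-1}g\in P(R)$.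
   Context: For integers $k_1\ge\cdots\ge k_r$, an element $h\in\mathrm{GL}_r(F)$ has type $(k_1,\dots,k_r)$ if $h\in\mathrm{GL}_r(R)\,\mathrm{diag}(\pi^{k_1},\dots,\pi^{k_r})\,\mathrm{GL}_r(R)$. *)

theory Defs
  imports "Jordan_Normal_Form.Determinant"
begin

text \<open>A discrete (normalised, surjective) valuation on a field F; its valuation ring
  R = {x. x = 0 or v x >= 0} is a DVR with fraction field F, and every DVR arises so.
  The value v 0 is irrelevant (conventionally +infinity).\<close>
definition discrete_valuation :: "('a::field \<Rightarrow> int) \<Rightarrow> bool" where
  "discrete_valuation v \<longleftrightarrow>
     (\<forall>x y. x \<noteq> 0 \<longrightarrow> y \<noteq> 0 \<longrightarrow> v (x * y) = v x + v y) \<and>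
     (\<forall>x y. x \<noteq> 0 \<longrightarrow> y \<noteq> 0 \<longrightarrow> x + y \<noteq> 0 \<longrightarrow> min (v x) (v y) \<le> v (x + y)) \<and>
     (\<forall>k. \<exists>x. x \<noteq> 0 \<and> v x = k)"

definition val_ring :: "('a::field \<Rightarrow> int) \<Rightarrow> 'a set" where
  "val_ring v = {x. x = 0 \<or> 0 \<le> v x}"

definition uniformizer :: "('a::field \<Rightarrow> int) \<Rightarrow> 'a \<Rightarrow> bool" where
  "uniformizer v p \<longleftrightarrow> p \<noteq> 0 \<and> v p = 1"

definition GL_F :: "nat \<Rightarrow> 'a::field mat set" where
  "GL_F r = {A. A \<in> carrier_mat r r \<and> det A \<noteq> 0}"

definition GL_R :: "('a::field \<Rightarrow> int) \<Rightarrow> nat \<Rightarrow> 'a mat set" where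
  "GL_R v r = {A. A \<in> carrier_mat r r \<and>
      (\<forall>i<r. \<forall>j<r. A $$ (i, j) \<in> val_ring v) \<and> det A \<noteq> 0 \<and> v (det A) = 0}"

definition diag_pow :: "'a::field \<Rightarrow> int list \<Rightarrow> 'a mat" where
  "diag_pow p ks = mat (length ks) (length ks) (\<lambda>(i, j). if i = j then p powi (ks ! i) else 0)"

definition has_type :: "('a::field \<Rightarrow> int) \<Rightarrow> 'a \<Rightarrow> 'a mat \<Rightarrow> int list \<Rightarrow> bool" where
  "has_type v p h ks \<longleftrightarrow>
     (\<exists>U V. U \<in> GL_R v (length ks) \<and> V \<in> GL_R v (length ks) \<and> h = U * diag_pow p ks * V)"

text \<open>Block data for n = n_1 + ... + n_m given as the list ns = [n_1,...,n_m].
  N ns l = n_1 + ... + n_l; blk ns i is the (0-based) block containing index i (0-based).\<close>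
definition N :: "nat list \<Rightarrow> nat \<Rightarrow> nat" where
  "N ns l = sum_list (take l ns)"

definition blk :: "nat list \<Rightarrow> nat \<Rightarrow> nat" where
  "blk ns i = card {l. 1 \<le> l \<and> l \<le> length ns \<and> N ns l \<le> i}"

definition P_F :: "nat list \<Rightarrow> 'a::field mat set" where
  "P_F ns = {A. A \<in> GL_F (sum_list ns) \<and>
      (\<forall>i<sum_list ns. \<forall>j<sum_list ns. blk ns i < blk ns j \<longrightarrow> A $$ (i, j) = 0)}"

definition P_R :: "('a::field \<Rightarrow> int) \<Rightarrow> nat list \<Rightarrow> 'a mat set" where
  "P_R v ns = P_F ns \<inter> GL_R v (sum_list ns)"

definition levi_part :: "nat list \<Rightarrow> 'a::field mat \<Rightarrow> 'a mat" where
  "levi_part ns A = mat (sum_list ns) (sum_list ns)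
      (\<lambda>(i, j). if blk ns i = blk ns j then A $$ (i, j) else 0)"

definition lower_right :: "nat \<Rightarrow> 'a mat \<Rightarrow> 'a mat" where
  "lower_right a A = mat (dim_row A - a) (dim_col A - a) (\<lambda>(i, j). A $$ (i + a, j + a))"

end

theory Submission
  imports Defs
begin

text \<open>
  Since det g_L = det g is nonzero, the equation g_L h = g determines h. Let D be the lower
  right corner of g starting at block a, of size r = n - N_a, and M the last r rows of g.
  As g is block lower triangular, the rows of h in block a are the first rows of D^-1 M.
  The columns of M beyond N_a are those of D, so D^-1 M is the identity there, and h is
  block lower triangular. By Cramer's rule the other entries of D^-1 M are r x r minors of M
  divided by det D. Writing g = U diag(pi^k) V with U, V integral, every such minor has
  valuation at least the sum k_(N_a+1) + ... + k_n of the r smallest exponents, and this is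
  the valuation of det D because D has type (k_(N_a+1), ..., k_n). Hence h is integral,
  and det h = 1.
\<close>

section \<open>Integer valuations\<close>

definition val_ge :: "('a::zero \<Rightarrow> int) \<Rightarrow> 'a \<Rightarrow> int \<Rightarrow> bool" where
  "val_ge v x e \<longleftrightarrow> x = 0 \<or> e \<le> v x"

lemma val_ge_0 [simp]: "val_ge v 0 e"
  by (simp add: val_ge_def)

lemma val_ge_mono: "val_ge v x e \<Longrightarrow> e' \<le> e \<Longrightarrow> val_ge v x e'"
  unfolding val_ge_def by auto

lemma val_ring_iff_val_ge: "x \<in> val_ring v \<longleftrightarrow> val_ge v x 0"
  by (simp add: val_ring_def val_ge_def)

locale int_valuation =
  fixes v :: "'a::field \<Rightarrow> int"
  assumes val_mult: "x \<noteq> 0 \<Longrightarrow> y \<noteq> 0 \<Longrightarrow> v (x * y) = v x + v y"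
    and val_add_ge_min: "x \<noteq> 0 \<Longrightarrow> y \<noteq> 0 \<Longrightarrow> x + y \<noteq> 0 \<Longrightarrow> min (v x) (v y) \<le> v (x + y)"

lemma int_valuation_if_discrete_valuation:
  "discrete_valuation v \<Longrightarrow> int_valuation v"
  unfolding discrete_valuation_def int_valuation_def by blast

context int_valuation
begin

lemma val_one [simp]: "v 1 = 0"
  using val_mult[of 1 1] by simp

lemma val_inverse: "x \<noteq> 0 \<Longrightarrow> v (inverse x) = - v x"
  using val_mult[of x "inverse x"] by simp

lemma val_divide: "x \<noteq> 0 \<Longrightarrow> y \<noteq> 0 \<Longrightarrow> v (x / y) = v x - v y"
  by (simp add: divide_inverse val_mult val_inverse)

lemma val_minus [simp]: "v (- x) = v x"
proof (cases "x = 0")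
  case False
  have "v (-1) = 0"
    using val_mult[of "-1" "-1"] by simp
  then show ?thesis
    using val_mult[of "-1" x] False by simp
qed simp

lemma val_power: "x \<noteq> 0 \<Longrightarrow> v (x ^ n) = int n * v x"
  by (induction n) (auto simp: val_mult algebra_simps)

lemma val_power_int: "x \<noteq> 0 \<Longrightarrow> v (x powi k) = k * v x"
  by (auto simp: power_int_def val_power val_inverse)

lemma val_prod: "(\<And>i. i \<in> S \<Longrightarrow> f i \<noteq> 0) \<Longrightarrow> v (prod f S) = (\<Sum>i\<in>S. v (f i))"
  by (induction S rule: infinite_finite_induct) (auto simp: val_mult)

lemma val_ge_add: "val_ge v x e \<Longrightarrow> val_ge v y e \<Longrightarrow> val_ge v (x + y) e"
  unfolding val_ge_def using val_add_ge_min[of x y] by fastforce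

lemma val_ge_sum: "(\<And>i. i \<in> S \<Longrightarrow> val_ge v (f i) e) \<Longrightarrow> val_ge v (sum f S) e"
  by (induction S rule: infinite_finite_induct) (auto intro: val_ge_add)

lemma val_ge_mult: "val_ge v x a \<Longrightarrow> val_ge v y b \<Longrightarrow> val_ge v (x * y) (a + b)"
  unfolding val_ge_def by (cases "x = 0"; cases "y = 0") (auto simp: val_mult)

lemma val_ge_prod:
  "(\<And>i. i \<in> S \<Longrightarrow> val_ge v (f i) (e i)) \<Longrightarrow> val_ge v (prod f S) (sum e S)"
proof (induction S rule: infinite_finite_induct)
  case (insert x S)
  then have "val_ge v (f x * prod f S) (e x + sum e S)"
    by (intro val_ge_mult) auto
  with insert show ?case
    by simp
qed (simp_all add: val_ge_def)

lemma val_ge_minus [simp]: "val_ge v (- x) e \<longleftrightarrow> val_ge v x e"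
  by (simp add: val_ge_def)

lemma val_ge_divide: "val_ge v x e \<Longrightarrow> y \<noteq> 0 \<Longrightarrow> val_ge v (x / y) (e - v y)"
  unfolding val_ge_def by (cases "x = 0") (auto simp: val_divide)

lemma val_ge_det:
  assumes A: "A \<in> carrier_mat n n"
    and entries: "\<And>i j. i < n \<Longrightarrow> j < n \<Longrightarrow> val_ge v (A $$ (i, j)) 0"
  shows "val_ge v (det A) 0"
  unfolding det_def'[OF A]
proof (rule val_ge_sum)
  fix p assume "p \<in> {p. p permutes {0..<n}}"
  then have "val_ge v (\<Prod>i = 0..<n. A $$ (i, p i)) (\<Sum>i = 0..<n. 0)"
    by (intro val_ge_prod entries) (auto simp: permutes_in_image)
  then show "val_ge v (signof p * (\<Prod>i = 0..<n. A $$ (i, p i))) 0"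
    by (simp add: sign_def)
qed

end

lemma sum_tail_le_sum_subset:
  fixes c :: "nat \<Rightarrow> 'b::linordered_idom"
  assumes antimono: "\<And>i j. i \<le> j \<Longrightarrow> j < n \<Longrightarrow> c j \<le> c i"
    and T: "T \<subseteq> {0..<n}" "card T = r"
  shows "(\<Sum>j\<in>{n-r..<n}. c j) \<le> (\<Sum>j\<in>T. c j)"
proof -
  let ?I = "{n-r..<n}"
  have fin: "finite T"
    using T(1) finite_subset by blast
  have "r \<le> n"
    using card_mono[OF _ T(1)] T(2) by simp
  then have "card (T - ?I) = card (?I - T)"
    using fin T by (simp add: card_Diff_subset_Int Int_commute)
  moreover have "c (n - r) \<le> c x" if "x \<in> T - ?I" for x
  proof -
    have "0 < r"
      using that fin T(2) card_gt_0_iff by blast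
    moreover have "x < n - r"
      using that T(1) by auto
    ultimately show ?thesis
      by (intro antimono) auto
  qed
  moreover have "c y \<le> c (n - r)" if "y \<in> ?I - T" for y
    using that antimono by simp
  ultimately have "(\<Sum>j\<in>?I - T. c j) \<le> (\<Sum>j\<in>T - ?I. c j)"
    using sum_bounded_above[of "?I - T" c "c (n - r)"] sum_bounded_below[of "T - ?I" "c (n - r)" c]
    by simp
  then show ?thesis
    using sum.Int_Diff[of ?I c T] sum.Int_Diff[OF fin, of c ?I] by (simp add: Int_commute)
qed

lemma sum_list_drop: "sum_list (drop s xs) = (\<Sum>j = s..<length xs. xs ! j)"
proof -
  have "drop s xs = map ((!) xs) [s..<length xs]"
    by (rule nth_equalityI) auto
  then show ?thesis
    by (simp add: sum_set_upt_conv_sum_list_nat[symmetric])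
qed

context int_valuation
begin

text \<open>Expanding \<open>det (A * B)\<close> by multilinearity in the rows, every term that survives
  picks \<open>r\<close> distinct columns of \<open>A\<close>; hence the bound is the sum of the \<open>r\<close> smallest \<open>c l\<close>.\<close>
lemma val_ge_det_mult:
  fixes c :: "nat \<Rightarrow> int"
  assumes A: "A \<in> carrier_mat r n" and B: "B \<in> carrier_mat n r"
    and A_val: "\<And>i l. i < r \<Longrightarrow> l < n \<Longrightarrow> val_ge v (A $$ (i, l)) (c l)"
    and B_val: "\<And>l u. l < n \<Longrightarrow> u < r \<Longrightarrow> val_ge v (B $$ (l, u)) 0"
    and antimono: "\<And>i j. i \<le> j \<Longrightarrow> j < n \<Longrightarrow> c j \<le> c i"
  shows "val_ge v (det (A * B)) (\<Sum>j\<in>{n-r..<n}. c j)"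
proof -
  let ?F = "{f. (\<forall>i\<in>{0..<r}. f i \<in> {0..<n}) \<and> (\<forall>i. i \<notin> {0..<r} \<longrightarrow> f i = i)}"
  let ?term = "\<lambda>f. det (mat\<^sub>r r r (\<lambda>i. A $$ (i, f i) \<cdot>\<^sub>v row B (f i)))"
  have "det (A * B) = (\<Sum>f\<in>?F. ?term f)"
    unfolding mat_mul_finsum_alt[OF A B] using B by (intro det_linear_rows_sum) auto
  also have "val_ge v \<dots> (\<Sum>j\<in>{n-r..<n}. c j)"
  proof (rule val_ge_sum)
    fix f assume f: "f \<in> ?F"
    have term_eq: "?term f = (\<Prod>i = 0..<r. A $$ (i, f i)) * det (mat\<^sub>r r r (\<lambda>i. row B (f i)))"
      using B by (intro det_rows_mul) auto
    show "val_ge v (?term f) (\<Sum>j\<in>{n-r..<n}. c j)"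
    proof (cases "inj_on f {0..<r}")
      case True
      have "(\<Sum>j\<in>{n-r..<n}. c j) \<le> (\<Sum>j\<in>f ` {0..<r}. c j)"
        using f True by (intro sum_tail_le_sum_subset[OF antimono]) (auto simp: card_image)
      also have "\<dots> = (\<Sum>i = 0..<r. c (f i)) + 0"
        using True by (simp add: sum.reindex)
      finally have bound: "(\<Sum>j\<in>{n-r..<n}. c j) \<le> (\<Sum>i = 0..<r. c (f i)) + 0" .
      have "val_ge v (?term f) ((\<Sum>i = 0..<r. c (f i)) + 0)"
        unfolding term_eq using f B by (intro val_ge_mult val_ge_prod val_ge_det A_val) (auto intro!: B_val)
      then show ?thesis
        using bound by (rule val_ge_mono)
    next
      case False
      then obtain i j where "i < r" "j < r" "i \<noteq> j" "f i = f j"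
        unfolding inj_on_def by auto
      then have "det (mat\<^sub>r r r (\<lambda>i. row B (f i))) = 0"
        using B by (intro det_identical_rows[of _ r i j]) auto
      then show ?thesis
        unfolding term_eq by simp
    qed
  qed
  finally show ?thesis .
qed

end

section \<open>Blocks and the Levi part\<close>

lemma N_0 [simp]: "N ns 0 = 0"
  by (simp add: N_def)

lemma N_length: "N ns (length ns) = sum_list ns"
  by (simp add: N_def)

lemma N_mono: "l \<le> l' \<Longrightarrow> N ns l \<le> N ns l'"
  unfolding N_def by (metis le_Suc_ex take_add sum_list_append le_add1)

lemma N_le_iff_le_blk:
  assumes "a \<le> length ns"
  shows "N ns a \<le> i \<longleftrightarrow> a \<le> blk ns i"
proof -
  let ?S = "{l. 1 \<le> l \<and> l \<le> length ns \<and> N ns l \<le> i}"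
  have fin: "finite ?S"
    by (rule finite_subset[of _ "{1..length ns}"]) auto
  show ?thesis
  proof
    assume a: "N ns a \<le> i"
    have "{1..a} \<subseteq> ?S"
    proof
      fix l assume "l \<in> {1..a}"
      then show "l \<in> ?S"
        using assms a N_mono[of l a ns] by auto
    qed
    from card_mono[OF fin this] show "a \<le> blk ns i"
      by (simp add: blk_def)
  next
    assume a: "a \<le> blk ns i"
    show "N ns a \<le> i"
    proof (rule ccontr)
      assume not_le: "\<not> N ns a \<le> i"
      have "?S \<subseteq> {1..<a}"
      proof
        fix l assume "l \<in> ?S"
        then show "l \<in> {1..<a}"
          using not_le N_mono[of a l ns] by (cases "a \<le> l") auto
      qed
      from card_mono[OF _ this] have "blk ns i \<le> a - 1"
        by (simp add: blk_def)
      moreover have "a \<noteq> 0"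
        using not_le by (cases a) auto
      ultimately show False
        using a by simp
    qed
  qed
qed

lemma blk_less_length: "i < sum_list ns \<Longrightarrow> blk ns i < length ns"
  using N_le_iff_le_blk[of "length ns" ns i] by (simp add: N_length)

lemma permutes_ex_less:
  fixes f :: "'a \<Rightarrow> 'b::{ordered_cancel_comm_monoid_add, linorder}"
  assumes p: "p permutes S" and S: "finite S" and i: "i \<in> S" "f (p i) \<noteq> f i"
  shows "\<exists>j\<in>S. f j < f (p j)"
proof (rule ccontr)
  assume "\<not> ?thesis"
  then have le: "\<And>j. j \<in> S \<Longrightarrow> f (p j) \<le> f j"
    by (meson not_le_imp_less)
  moreover have "f (p i) < f i"
    using le[of i] i by (simp add: order.strict_iff_order)
  ultimately have "(\<Sum>j\<in>S. f (p j)) < (\<Sum>j\<in>S. f j)"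
    using i(1) by (intro sum_strict_mono_ex1[OF S]) auto
  moreover have "(\<Sum>j\<in>S. f (p j)) = (\<Sum>j\<in>S. f j)"
    using sum.permute[OF p, of f] by (simp add: o_def)
  ultimately show False
    by simp
qed

text \<open>A permutation that moves some index to another block moves some index to a later
  block, where the entry of a block lower triangular matrix vanishes; so only
  block preserving permutations contribute to either determinant.\<close>
lemma det_levi_part:
  assumes A: "A \<in> carrier_mat (sum_list ns) (sum_list ns)"
    and upper_0: "\<forall>i<sum_list ns. \<forall>j<sum_list ns. blk ns i < blk ns j \<longrightarrow> A $$ (i, j) = 0"
  shows "det (levi_part ns A) = det A"
proof -
  let ?n = "sum_list ns"
  have L: "levi_part ns A \<in> carrier_mat ?n ?n"
    by (simp add: levi_part_def)
  show ?thesis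
    unfolding det_def'[OF A] det_def'[OF L]
  proof (rule sum.cong[OF refl])
    fix p assume "p \<in> {p. p permutes {0..<?n}}"
    then have p: "p permutes {0..<?n}" and p_less: "\<And>i. i < ?n \<Longrightarrow> p i < ?n"
      by (auto simp: permutes_in_image)
    show "signof p * (\<Prod>i = 0..<?n. levi_part ns A $$ (i, p i)) = signof p * (\<Prod>i = 0..<?n. A $$ (i, p i))"
    proof (cases "\<forall>i<?n. blk ns (p i) = blk ns i")
      case True
      then show ?thesis
        using p_less by (auto simp: levi_part_def intro!: prod.cong)
    next
      case False
      then obtain i where i: "i < ?n" "blk ns (p i) \<noteq> blk ns i"
        by auto
      then have levi_0: "(\<Prod>i = 0..<?n. levi_part ns A $$ (i, p i)) = 0"
        using p_less by (intro prod_zero bexI[of _ i]) (auto simp: levi_part_def)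
      obtain j where "j < ?n" "blk ns j < blk ns (p j)"
        using permutes_ex_less[OF p _ _ i(2)] i(1) by auto
      then have "(\<Prod>i = 0..<?n. A $$ (i, p i)) = 0"
        using p_less upper_0 by (intro prod_zero bexI[of _ j]) auto
      then show ?thesis
        unfolding levi_0 by simp
    qed
  qed
qed

section \<open>Matrices of a given type\<close>

lemma diag_pow_carrier: "diag_pow p ks \<in> carrier_mat (length ks) (length ks)"
  by (simp add: diag_pow_def)

lemma det_diag_pow: "det (diag_pow p ks) = (\<Prod>i = 0..<length ks. p powi (ks ! i))"
proof -
  have "upper_triangular (diag_pow p ks)"
    by (auto simp: upper_triangular_def diag_pow_def)
  then have "det (diag_pow p ks) = prod_list (diag_mat (diag_pow p ks))"
    by (rule det_upper_triangular[OF _ diag_pow_carrier])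
  then show ?thesis
    by (simp add: prod_list_diag_prod diag_pow_def)
qed

lemma mult_diag_pow_index:
  assumes "U \<in> carrier_mat m (length ks)" "x < m" "l < length ks"
  shows "(U * diag_pow p ks) $$ (x, l) = U $$ (x, l) * p powi (ks ! l)"
proof -
  have "(U * diag_pow p ks) $$ (x, l) =
      (\<Sum>k = 0..<length ks. U $$ (x, k) * (if k = l then p powi (ks ! k) else 0))"
    using assms by (simp add: diag_pow_def scalar_prod_def)
  then show ?thesis
    using assms(3) by (subst (asm) sum.remove[of _ l]) auto
qed

lemma has_type_carrier:
  assumes "has_type v p h ks"
  shows "h \<in> carrier_mat (length ks) (length ks)"
proof -
  obtain U V where "U \<in> carrier_mat (length ks) (length ks)" "V \<in> carrier_mat (length ks) (length ks)"
    and "h = U * diag_pow p ks * V"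
    using assms unfolding has_type_def GL_R_def by blast
  then show ?thesis
    using diag_pow_carrier by (metis mult_carrier_mat)
qed

context int_valuation
begin

lemma val_ge_uniformizer_power_int: "uniformizer v p \<Longrightarrow> val_ge v (p powi k) k"
  by (simp add: uniformizer_def val_ge_def val_power_int)

lemma has_type_det:
  assumes p: "uniformizer v p" and h: "has_type v p h ks"
  shows "det h \<noteq> 0" and "v (det h) = sum_list ks"
proof -
  obtain U V where U: "U \<in> GL_R v (length ks)" and V: "V \<in> GL_R v (length ks)"
    and h_eq: "h = U * diag_pow p ks * V"
    using h unfolding has_type_def by blast
  have p_pow: "p powi k \<noteq> 0" "v (p powi k) = k" for k
    using p by (auto simp: uniformizer_def val_power_int)
  have Uc: "U \<in> carrier_mat (length ks) (length ks)" and Vc: "V \<in> carrier_mat (length ks) (length ks)"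
    using U V by (auto simp: GL_R_def)
  have det_h: "det h = det U * det (diag_pow p ks) * det V"
    unfolding h_eq det_mult[OF mult_carrier_mat[OF Uc diag_pow_carrier] Vc] det_mult[OF Uc diag_pow_carrier] ..
  have "det (diag_pow p ks) \<noteq> 0" "v (det (diag_pow p ks)) = sum_list ks"
    using p_pow by (simp_all add: det_diag_pow val_prod sum_list_sum_nth)
  with U V show "det h \<noteq> 0" "v (det h) = sum_list ks"
    unfolding det_h GL_R_def by (auto simp: val_mult)
qed

text \<open>Writing \<open>g = U diag(\<pi>\<^sup>k) V\<close>, a minor of the last \<open>r\<close> rows of \<open>g\<close> is
  \<open>det (A * B)\<close> with the \<open>l\<close>-th column of \<open>A\<close> divisible by \<open>\<pi>\<^sup>k\<^sub>l\<close>.\<close>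
lemma has_type_minor_val_ge:
  assumes p: "uniformizer v p" and g: "has_type v p g ks" and sorted: "sorted_wrt (\<ge>) ks"
    and \<sigma>: "\<And>u. u < length ks - s \<Longrightarrow> \<sigma> u < length ks"
  shows "val_ge v (det (mat (length ks - s) (length ks - s) (\<lambda>(x, u). g $$ (x + s, \<sigma> u))))
    (sum_list (drop s ks))"
proof -
  let ?n = "length ks" and ?r = "length ks - s"
  obtain U V where U: "U \<in> GL_R v ?n" and V: "V \<in> GL_R v ?n" and g_eq: "g = U * diag_pow p ks * V"
    using g unfolding has_type_def by blast
  have Uc: "U \<in> carrier_mat ?n ?n" and Vc: "V \<in> carrier_mat ?n ?n"
    using U V by (auto simp: GL_R_def)
  define W where "W = U * diag_pow p ks"
  have W: "W \<in> carrier_mat ?n ?n" "\<And>x l. x < ?n \<Longrightarrow> l < ?n \<Longrightarrow> W $$ (x, l) = U $$ (x, l) * p powi (ks ! l)"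
    using mult_carrier_mat[OF Uc diag_pow_carrier] Uc by (simp_all add: W_def mult_diag_pow_index)
  define A where "A = mat ?r ?n (\<lambda>(x, l). W $$ (x + s, l))"
  define B where "B = mat ?n ?r (\<lambda>(l, u). V $$ (l, \<sigma> u))"
  have "mat ?r ?r (\<lambda>(x, u). g $$ (x + s, \<sigma> u)) = A * B"
  proof (rule eq_matI)
    fix x u assume "x < dim_row (A * B)" "u < dim_col (A * B)"
    then have x: "x < ?r" and u: "u < ?r"
      by (simp_all add: A_def B_def)
    then show "mat ?r ?r (\<lambda>(x, u). g $$ (x + s, \<sigma> u)) $$ (x, u) = (A * B) $$ (x, u)"
      using \<sigma>[OF u] W(1) Vc unfolding g_eq W_def[symmetric]
      by (auto simp: A_def B_def scalar_prod_def intro!: sum.cong)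
  qed (simp_all add: A_def B_def)
  moreover have "val_ge v (det (A * B)) (\<Sum>j = ?n - ?r..<?n. ks ! j)"
  proof (rule val_ge_det_mult)
    show "val_ge v (A $$ (i, l)) (ks ! l)" if "i < ?r" "l < ?n" for i l
      using that U W(2) val_ge_mult[of "U $$ (i + s, l)" 0 "p powi (ks ! l)" "ks ! l"]
      by (simp add: A_def GL_R_def val_ring_iff_val_ge val_ge_uniformizer_power_int[OF p])
    show "val_ge v (B $$ (l, u)) 0" if "l < ?n" "u < ?r" for l u
      using that V \<sigma> by (simp add: B_def GL_R_def val_ring_iff_val_ge)
    show "ks ! j \<le> ks ! i" if "i \<le> j" "j < ?n" for i j
      using that sorted_wrt_nth_less[OF sorted, of i j] by (cases "i = j") auto
  qed (simp_all add: A_def B_def)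
  moreover have "{?n - ?r..<?n} = {s..<?n}"
    by auto
  ultimately show ?thesis
    by (simp add: sum_list_drop)
qed

end

section \<open>Left division and Cramer's rule\<close>

definition mat_ldiv :: "'a::field mat \<Rightarrow> 'a mat \<Rightarrow> 'a mat" where
  "mat_ldiv D M = (1 / det D) \<cdot>\<^sub>m (adj_mat D * M)"

lemma mat_ldiv_carrier:
  assumes "D \<in> carrier_mat r r" and "M \<in> carrier_mat r n"
  shows "mat_ldiv D M \<in> carrier_mat r n"
  using assms adj_mat(1)[OF assms(1)] by (simp add: mat_ldiv_def)

lemma mult_mat_ldiv:
  assumes D: "D \<in> carrier_mat r r" and det_D: "det D \<noteq> 0" and M: "M \<in> carrier_mat r n"
  shows "D * mat_ldiv D M = M"
proof -
  have "D * mat_ldiv D M = (1 / det D) \<cdot>\<^sub>m ((D * adj_mat D) * M)"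
    using D M adj_mat(1)[OF D]
    by (simp add: mat_ldiv_def mult_smult_distrib[OF D mult_carrier_mat[OF adj_mat(1)[OF D] M]])
  also have "\<dots> = (1 / det D) \<cdot>\<^sub>m (det D \<cdot>\<^sub>m M)"
    using M by (simp add: adj_mat(2)[OF D] mult_smult_assoc_mat[of _ r r])
  also have "\<dots> = M"
    using det_D by (intro eq_matI) auto
  finally show ?thesis .
qed

lemma mat_ldiv_mult:
  assumes D: "D \<in> carrier_mat r r" and det_D: "det D \<noteq> 0" and B: "B \<in> carrier_mat r n"
  shows "mat_ldiv D (D * B) = B"
proof -
  have "mat_ldiv D (D * B) = (1 / det D) \<cdot>\<^sub>m ((adj_mat D * D) * B)"
    using D B adj_mat(1)[OF D] by (simp add: mat_ldiv_def assoc_mult_mat)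
  also have "\<dots> = (1 / det D) \<cdot>\<^sub>m (det D \<cdot>\<^sub>m B)"
    using B by (simp add: adj_mat(3)[OF D] mult_smult_assoc_mat[of _ r r])
  also have "\<dots> = B"
    using det_D by (intro eq_matI) auto
  finally show ?thesis .
qed

lemma mat_mult_left_cancel:
  fixes D :: "'a::field mat"
  assumes "D \<in> carrier_mat r r" "det D \<noteq> 0" "B \<in> carrier_mat r n" "C \<in> carrier_mat r n"
    and "D * B = D * C"
  shows "B = C"
proof -
  have "B = mat_ldiv D (D * B)"
    using assms(1-3) by (rule mat_ldiv_mult[symmetric])
  also have "\<dots> = C"
    unfolding \<open>D * B = D * C\<close> using assms(1,2,4) by (rule mat_ldiv_mult)
  finally show ?thesis .
qed

lemma mat_ldiv_index:
  assumes D: "D \<in> carrier_mat r r" and det_D: "det D \<noteq> 0" and M: "M \<in> carrier_mat r n"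
    and t: "t < r" and j: "j < n"
  shows "mat_ldiv D M $$ (t, j) = det (replace_col D (col M j) t) / det D"
proof -
  have X: "mat_ldiv D M \<in> carrier_mat r n"
    using D M by (rule mat_ldiv_carrier)
  have "col M j = D *\<^sub>v col (mat_ldiv D M) j"
    using mult_mat_ldiv[OF D det_D M] col_mult2[OF D X j] by simp
  then have "det (replace_col D (col M j) t) = mat_ldiv D M $$ (t, j) * det D"
    using cramer_lemma_mat[OF D col_carrier_vec[OF j X] t] X t j by simp
  then show ?thesis
    using det_D by simp
qed

lemma mat_ldiv_index_eq_0:
  assumes D: "D \<in> carrier_mat r r" and det_D: "det D \<noteq> 0" and M: "M \<in> carrier_mat r n"
    and t: "t < r" and j: "j < n" and u: "u < r" "t \<noteq> u" and col_eq: "col M j = col D u"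
  shows "mat_ldiv D M $$ (t, j) = 0"
proof -
  have "det (replace_col D (col D u) t) = 0"
  proof (rule det_identical_columns[of _ r t u])
    show "col (replace_col D (col D u) t) t = col (replace_col D (col D u) t) u"
      using D t u by (intro eq_vecI) (auto simp: replace_col_def)
  qed (use D t u in \<open>auto simp: replace_col_def\<close>)
  then show ?thesis
    using mat_ldiv_index[OF D det_D M t j] col_eq by simp
qed

definition bottom_rows :: "nat \<Rightarrow> 'a mat \<Rightarrow> 'a mat" where
  "bottom_rows s A = mat (dim_row A - s) (dim_col A) (\<lambda>(i, j). A $$ (i + s, j))"

lemma lower_right_0 [simp]: "lower_right 0 A = A"
  by (auto simp: lower_right_def intro!: eq_matI)

lemma mat_ldiv_lower_right_index_eq_0:
  assumes g: "g \<in> carrier_mat n n" and det_D: "det (lower_right s g) \<noteq> 0"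
    and t: "t < n - s" and j: "s \<le> j" "j < n" "t \<noteq> j - s"
  shows "mat_ldiv (lower_right s g) (bottom_rows s g) $$ (t, j) = 0"
proof (rule mat_ldiv_index_eq_0[OF _ det_D _ t j(2)])
  show "col (bottom_rows s g) j = col (lower_right s g) (j - s)"
    using g j by (intro eq_vecI) (auto simp: bottom_rows_def lower_right_def)
qed (use g j in \<open>auto simp: bottom_rows_def lower_right_def\<close>)

context int_valuation
begin

lemma mat_ldiv_lower_right_integral:
  assumes p: "uniformizer v p" and g: "has_type v p g ks" and sorted: "sorted_wrt (\<ge>) ks"
    and D: "has_type v p (lower_right s g) (drop s ks)"
    and t: "t < length ks - s" and j: "j < length ks"
  shows "val_ge v (mat_ldiv (lower_right s g) (bottom_rows s g) $$ (t, j)) 0"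
proof -
  let ?n = "length ks" and ?r = "length ks - s"
  have g_carrier: "g \<in> carrier_mat ?n ?n"
    using g by (rule has_type_carrier)
  then have D_carrier: "lower_right s g \<in> carrier_mat ?r ?r"
    and M_carrier: "bottom_rows s g \<in> carrier_mat ?r ?n"
    by (simp_all add: lower_right_def bottom_rows_def)
  have det_D: "det (lower_right s g) \<noteq> 0" "v (det (lower_right s g)) = sum_list (drop s ks)"
    using has_type_det[OF p D] by simp_all
  define \<sigma> where "\<sigma> u = (if u = t then j else u + s)" for u
  have "replace_col (lower_right s g) (col (bottom_rows s g) j) t =
      mat ?r ?r (\<lambda>(x, u). g $$ (x + s, \<sigma> u))"
    using g_carrier t j
    by (auto simp: replace_col_def lower_right_def bottom_rows_def \<sigma>_def intro!: eq_matI)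
  moreover have "val_ge v (det (mat ?r ?r (\<lambda>(x, u). g $$ (x + s, \<sigma> u)))) (v (det (lower_right s g)))"
    unfolding det_D(2) using j by (intro has_type_minor_val_ge[OF p g sorted]) (auto simp: \<sigma>_def)
  ultimately have "val_ge v
      (det (replace_col (lower_right s g) (col (bottom_rows s g) j) t) / det (lower_right s g))
      (v (det (lower_right s g)) - v (det (lower_right s g)))"
    by (intro val_ge_divide det_D(1)) simp
  then show ?thesis
    by (simp add: mat_ldiv_index[OF D_carrier det_D(1) M_carrier t j])
qed

end

section \<open>The Levi factor\<close>

definition stack_rows :: "nat list \<Rightarrow> (nat \<Rightarrow> 'a mat) \<Rightarrow> 'a mat" where
  "stack_rows ns X = mat (sum_list ns) (sum_list ns) (\<lambda>(i, j). X (blk ns i) $$ (i - N ns (blk ns i), j))"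

lemma levi_part_index:
  assumes upper_0: "\<forall>i<sum_list ns. \<forall>j<sum_list ns. blk ns i < blk ns j \<longrightarrow> A $$ (i, j) = 0"
    and i: "i < sum_list ns" and k: "k < sum_list ns"
  shows "levi_part ns A $$ (i, k) = (if N ns (blk ns i) \<le> k then A $$ (i, k) else 0)"
proof -
  have "N ns (blk ns i) \<le> k \<longleftrightarrow> blk ns i \<le> blk ns k"
    using N_le_iff_le_blk[of "blk ns i" ns k] blk_less_length[OF i] by simp
  then show ?thesis
    using upper_0 i k by (auto simp: levi_part_def)
qed

lemma levi_part_mult_stack_rows:
  assumes g: "g \<in> carrier_mat (sum_list ns) (sum_list ns)"
    and upper_0: "\<forall>i<sum_list ns. \<forall>j<sum_list ns. blk ns i < blk ns j \<longrightarrow> g $$ (i, j) = 0"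
    and X: "\<And>a. a < length ns \<Longrightarrow> X a \<in> carrier_mat (sum_list ns - N ns a) (sum_list ns)"
    and solves: "\<And>a. a < length ns \<Longrightarrow> lower_right (N ns a) g * X a = bottom_rows (N ns a) g"
  shows "levi_part ns g * stack_rows ns X = g"
proof (rule eq_matI)
  let ?n = "sum_list ns"
  fix i j assume "i < dim_row g" "j < dim_col g"
  then have i: "i < ?n" and j: "j < ?n"
    using g by auto
  define a where "a = blk ns i"
  define s where "s = N ns a"
  have a: "a < length ns"
    using i by (simp add: a_def blk_less_length)
  have s_le_iff: "s \<le> k \<longleftrightarrow> a \<le> blk ns k" for k
    unfolding s_def using N_le_iff_le_blk[of a ns k] a by simp
  have s_i: "s \<le> i"
    using s_le_iff[of i] by (simp add: a_def)
  have "(levi_part ns g * stack_rows ns X) $$ (i, j) =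
      (\<Sum>k = 0..<?n. levi_part ns g $$ (i, k) * stack_rows ns X $$ (k, j))"
    using i j by (simp add: levi_part_def stack_rows_def scalar_prod_def)
  also have "\<dots> = (\<Sum>k = 0..<?n. (if s \<le> k then g $$ (i, k) else 0) * stack_rows ns X $$ (k, j))"
    using i by (intro sum.cong) (simp_all add: levi_part_index[OF upper_0] a_def s_def)
  also have "\<dots> = (\<Sum>k = s..<?n. g $$ (i, k) * stack_rows ns X $$ (k, j))"
    by (rule sum.mono_neutral_cong_right) auto
  also have "\<dots> = (\<Sum>k = s..<?n. g $$ (i, k) * X a $$ (k - s, j))"
  proof (rule sum.cong[OF refl])
    fix k assume k: "k \<in> {s..<?n}"
    then consider "blk ns k = a" | "a < blk ns k"
      using s_le_iff[of k] by fastforce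
    then show "g $$ (i, k) * stack_rows ns X $$ (k, j) = g $$ (i, k) * X a $$ (k - s, j)"
    proof cases
      case 1
      then show ?thesis
        using k j by (simp add: stack_rows_def s_def)
    next
      case 2
      then show ?thesis
        using k i upper_0 by (simp add: a_def)
    qed
  qed
  also have "\<dots> = (\<Sum>t = 0..<?n - s. g $$ (i, t + s) * X a $$ (t, j))"
    using s_i i by (intro sum.reindex_bij_witness[of _ "\<lambda>t. t + s" "\<lambda>k. k - s"]) auto
  also have "\<dots> = (lower_right s g * X a) $$ (i - s, j)"
    using g X[OF a] i j s_i by (simp add: lower_right_def scalar_prod_def s_def)
  also have "\<dots> = g $$ (i, j)"
    using solves[OF a] g i j s_i by (simp add: s_def bottom_rows_def)
  finally show "(levi_part ns g * stack_rows ns X) $$ (i, j) = g $$ (i, j)" .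
qed (use g in \<open>simp_all add: levi_part_def stack_rows_def\<close>)

lemma levi_factor_eq_stack_rows:
  fixes g :: "'a::field mat"
  assumes g: "g \<in> P_F ns" and h: "h \<in> carrier_mat (sum_list ns) (sum_list ns)"
    and gh: "levi_part ns g * h = g"
    and det_D: "\<And>a. a < length ns \<Longrightarrow> det (lower_right (N ns a) g) \<noteq> 0"
  shows "h = stack_rows ns (\<lambda>a. mat_ldiv (lower_right (N ns a) g) (bottom_rows (N ns a) g))"
    and "det h = 1"
proof -
  let ?n = "sum_list ns"
  have g_carrier: "g \<in> carrier_mat ?n ?n" and det_g: "det g \<noteq> 0"
    and upper_0: "\<forall>i<?n. \<forall>j<?n. blk ns i < blk ns j \<longrightarrow> g $$ (i, j) = 0"
    using g by (auto simp: P_F_def GL_F_def)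
  have L: "levi_part ns g \<in> carrier_mat ?n ?n"
    by (simp add: levi_part_def)
  have det_L: "det (levi_part ns g) = det g"
    using g_carrier upper_0 by (rule det_levi_part)
  have D: "lower_right (N ns a) g \<in> carrier_mat (?n - N ns a) (?n - N ns a)"
    and M: "bottom_rows (N ns a) g \<in> carrier_mat (?n - N ns a) ?n" for a
    using g_carrier by (simp_all add: lower_right_def bottom_rows_def)
  let ?S = "stack_rows ns (\<lambda>a. mat_ldiv (lower_right (N ns a) g) (bottom_rows (N ns a) g))"
  have "levi_part ns g * ?S = g"
  proof (rule levi_part_mult_stack_rows[OF g_carrier upper_0])
    fix a assume "a < length ns"
    show "mat_ldiv (lower_right (N ns a) g) (bottom_rows (N ns a) g) \<in> carrier_mat (?n - N ns a) ?n"
      using D M by (rule mat_ldiv_carrier)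
    show "lower_right (N ns a) g * mat_ldiv (lower_right (N ns a) g) (bottom_rows (N ns a) g) =
        bottom_rows (N ns a) g"
      using D det_D[OF \<open>a < length ns\<close>] M by (rule mult_mat_ldiv)
  qed
  moreover have "?S \<in> carrier_mat ?n ?n"
    by (simp add: stack_rows_def)
  ultimately show "h = ?S"
    using det_L det_g gh by (intro mat_mult_left_cancel[OF L _ h]) simp_all
  show "det h = 1"
    using det_mult[OF L h] gh det_L det_g by simp
qed

context int_valuation
begin

lemma stack_rows_mem_P_R:
  assumes det: "det (stack_rows ns X) = 1"
    and integral: "\<And>a t j. a < length ns \<Longrightarrow> t < sum_list ns - N ns a \<Longrightarrow> j < sum_list ns \<Longrightarrow>
      val_ge v (X a $$ (t, j)) 0"
    and unit_cols: "\<And>a t j. a < length ns \<Longrightarrow> t < sum_list ns - N ns a \<Longrightarrow> N ns a \<le> j \<Longrightarrow>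
      j < sum_list ns \<Longrightarrow> t \<noteq> j - N ns a \<Longrightarrow> X a $$ (t, j) = 0"
  shows "stack_rows ns X \<in> P_R v ns"
proof -
  let ?n = "sum_list ns"
  have blk_i: "blk ns i < length ns" "N ns (blk ns i) \<le> i" if "i < ?n" for i
  proof -
    show "blk ns i < length ns"
      using that by (rule blk_less_length)
    then show "N ns (blk ns i) \<le> i"
      using N_le_iff_le_blk[of "blk ns i" ns i] by simp
  qed
  have "stack_rows ns X $$ (i, j) = 0" if "i < ?n" "j < ?n" "blk ns i < blk ns j" for i j
  proof -
    have "N ns (blk ns i) \<le> j"
      using that blk_i(1)[OF that(1)] N_le_iff_le_blk[of "blk ns i" ns j] by simp
    moreover have "i \<noteq> j"
      using that(3) by auto
    ultimately show ?thesis
      using that blk_i[OF that(1)] by (auto simp: stack_rows_def intro!: unit_cols)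
  qed
  moreover have "stack_rows ns X $$ (i, j) \<in> val_ring v" if "i < ?n" "j < ?n" for i j
    using that blk_i[OF that(1)] by (auto simp: stack_rows_def val_ring_iff_val_ge intro!: integral)
  moreover have "stack_rows ns X \<in> carrier_mat ?n ?n"
    by (simp add: stack_rows_def)
  ultimately show ?thesis
    using det by (auto simp: P_R_def P_F_def GL_F_def GL_R_def)
qed

end

theorem lemma4p20:
  fixes v :: "'a::field \<Rightarrow> int" and p :: 'a and ns :: "nat list"
    and g h :: "'a mat" and ks :: "int list"
  assumes "discrete_valuation v"
    and "uniformizer v p"
    and "g \<in> P_F ns"
    and "length ks = sum_list ns"
    and "sorted_wrt (\<ge>) ks"
    and "\<forall>l < length ns. has_type v p (lower_right (N ns l) g) (drop (N ns l) ks)"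
    and "h \<in> carrier_mat (sum_list ns) (sum_list ns)"
    and "levi_part ns g * h = g"
  shows "h \<in> P_R v ns"
proof -
  interpret int_valuation v
    using assms(1) by (rule int_valuation_if_discrete_valuation)
  let ?X = "\<lambda>a. mat_ldiv (lower_right (N ns a) g) (bottom_rows (N ns a) g)"
  have type_D: "has_type v p (lower_right (N ns a) g) (drop (N ns a) ks)" if "a < length ns" for a
    using assms(6) that by blast
  have type_g: "has_type v p g ks" if "a < length ns" for a
    using type_D[of 0] that by (cases ns) auto
  have g: "g \<in> carrier_mat (sum_list ns) (sum_list ns)"
    using assms(3) by (simp add: P_F_def GL_F_def)
  note det_D = has_type_det(1)[OF assms(2) type_D]
  note h = levi_factor_eq_stack_rows[OF assms(3,7,8) det_D]
  have "stack_rows ns ?X \<in> P_R v ns"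
  proof (rule stack_rows_mem_P_R)
    show "det (stack_rows ns ?X) = 1"
      using h by simp
    show "val_ge v (?X a $$ (t, j)) 0"
      if "a < length ns" "t < sum_list ns - N ns a" "j < sum_list ns" for a t j
      using that assms(4) by (intro mat_ldiv_lower_right_integral[OF assms(2) type_g assms(5) type_D]) auto
    show "?X a $$ (t, j) = 0"
      if "a < length ns" "t < sum_list ns - N ns a" "N ns a \<le> j" "j < sum_list ns" "t \<noteq> j - N ns a"
      for a t j
      using that by (intro mat_ldiv_lower_right_index_eq_0[OF g det_D]) auto
  qed
  with h(1) show ?thesis
    by simp
qed

end
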